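(* Let $F\in\mathcal{SF}_n$ be a rooted spanning forest on $[n]$ with non-root vertices $v_1,\dots,v_k$ listed in some order. Define $F_0$ to be the forest on $[n]$ with no edges (all vertices roots), and for $i=1,\dots,k$ let $F_i$ be obtained from $F_{i-1}$ by adding the edge $\{v_i,p(v_i)\}$ and setting $R(F_i)=R(F_{i-1})\setminus\{v_i\}$, so $F_k=F$. Then $F_0\lessdot F_1\lessdot\cdots\lessdot F_k$ is a saturated chain in $\mathcal{SF}_n$ if and only if the listing $v_1,\dots,v_k$ is a linear extension, i.e. whenever $v_i$ is a descendant of $v_j$ in $F$ we have $i<j$.
   Context: A rooted spanning forest on $[n]$ is a spanning forest of the complete graph on $[n]$ with one distinguished vertex (root) in each connected component; $E(F)$ is its edge set and $R(F)$ its set of roots. $\mathcal{SF}_n$ is the set of such forests ordered by $F_1\le F_2$ iff $E(F_1)\subseteq E(F_2)$ and $R(F_2)\subseteq R(F_1)$; equivalently $F_1\lessdot F_2$ iff $F_2$ is obtained from $F_1$ by adding an edge $\{x,y\}$ between two roots $x,y\in R(F_1)$ (of different trees) and keeping exactly one of $x,y$ as root. For a non-root vertex $y$, its parent $p(y)$ is the neighbor of $y$ on the unique path from $y$ to the root of its component; $x$ is an ancestor of $y$ (and $y$ a descendant of $x$) if $x$ lies on the path from $y$ to its root. *)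

theory Defs
  imports Main
begin

text \<open>A rooted spanning forest on [n] = {1..n} is represented as a pair (E, R):
  E is its edge set (a set of 2-element subsets of {1..n}) and R its set of roots.\<close>

type_synonym forest = "nat set set \<times> nat set"

definition edges_of :: "forest \<Rightarrow> nat set set" where "edges_of F = fst F"
definition roots_of :: "forest \<Rightarrow> nat set" where "roots_of F = snd F"

definition is_path :: "nat set set \<Rightarrow> nat list \<Rightarrow> bool" where
  "is_path E xs \<longleftrightarrow> xs \<noteq> [] \<and> distinct xs \<and>
     (\<forall>i. Suc i < length xs \<longrightarrow> {xs ! i, xs ! Suc i} \<in> E)"

definition connected_in :: "nat set set \<Rightarrow> nat \<Rightarrow> nat \<Rightarrow> bool" where
  "connected_in E x y \<longleftrightarrow> (\<exists>xs. is_path E xs \<and> hd xs = x \<and> last xs = y)"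

definition has_cycle :: "nat set set \<Rightarrow> bool" where
  "has_cycle E \<longleftrightarrow> (\<exists>xs. 3 \<le> length xs \<and> is_path E xs \<and> {last xs, hd xs} \<in> E)"

definition SF :: "nat \<Rightarrow> forest set" where
  "SF n = {(E, R).
      E \<subseteq> {e. \<exists>x y. e = {x, y} \<and> x \<noteq> y \<and> x \<in> {1..n} \<and> y \<in> {1..n}} \<and>
      \<not> has_cycle E \<and> R \<subseteq> {1..n} \<and>
      (\<forall>x\<in>{1..n}. \<exists>!r. r \<in> R \<and> connected_in E x r)}"

definition sf_le :: "forest \<Rightarrow> forest \<Rightarrow> bool" where
  "sf_le F1 F2 \<longleftrightarrow> edges_of F1 \<subseteq> edges_of F2 \<and> roots_of F2 \<subseteq> roots_of F1"

text \<open>The covering relation of SF_n, as characterised in the paper: F2 is obtained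
  from F1 by adding an edge between two roots of different trees of F1 and keeping
  exactly one of them as a root.\<close>
definition sf_covers :: "nat \<Rightarrow> forest \<Rightarrow> forest \<Rightarrow> bool" where
  "sf_covers n F1 F2 \<longleftrightarrow> F1 \<in> SF n \<and> F2 \<in> SF n \<and>
     (\<exists>x y. x \<in> roots_of F1 \<and> y \<in> roots_of F1 \<and> \<not> connected_in (edges_of F1) x y \<and>
        edges_of F2 = insert {x, y} (edges_of F1) \<and>
        (roots_of F2 = roots_of F1 - {x} \<or> roots_of F2 = roots_of F1 - {y}))"

definition root_path :: "forest \<Rightarrow> nat \<Rightarrow> nat list \<Rightarrow> bool" where
  "root_path F y xs \<longleftrightarrow> is_path (edges_of F) xs \<and> hd xs = y \<and> last xs \<in> roots_of F"

definition parent :: "forest \<Rightarrow> nat \<Rightarrow> nat" where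
  "parent F y = (THE z. \<exists>xs. root_path F y (y # z # xs))"

definition ancestor :: "forest \<Rightarrow> nat \<Rightarrow> nat \<Rightarrow> bool" where
  "ancestor F x y \<longleftrightarrow> (\<exists>xs. root_path F y xs \<and> x \<in> set xs)"

definition descendant :: "forest \<Rightarrow> nat \<Rightarrow> nat \<Rightarrow> bool" where
  "descendant F y x \<longleftrightarrow> ancestor F x y \<and> x \<noteq> y"

text \<open>The forest F_i built from the listing vs (0-based: uses the first i entries).\<close>
definition chain_forest :: "nat \<Rightarrow> forest \<Rightarrow> nat list \<Rightarrow> nat \<Rightarrow> forest" where
  "chain_forest n F vs i =
     ((\<lambda>v. {v, parent F v}) ` set (take i vs), {1..n} - set (take i vs))"

end

theory Submission
  imports Defs
begin

text \<open>Passing from F(i-1) to F(i) adds the edge {v(i), p(v(i))}, so the step is a cover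
  exactly when p(v(i)) is still a root of F(i-1), i.e. when p(v(i)) is not among
  v(1), ..., v(i). Since the ancestors of a vertex are reached by iterating p, this local
  condition says precisely that every vertex is listed before all of its ancestors.
  For the converse one also has to see that each F(i) is a rooted forest: along its edges
  the position in the listing increases from child to parent, which rules out cycles and
  lets every vertex climb to a unique unlisted root.\<close>

lemma is_path_Nil [simp]: "\<not> is_path E []"
  by (simp add: is_path_def)

lemma is_path_singleton [simp]: "is_path E [a]"
  by (simp add: is_path_def)

lemma is_path_Cons:
  "is_path E (a # xs) \<longleftrightarrow> a \<notin> set xs \<and> (xs = [] \<or> {a, hd xs} \<in> E \<and> is_path E xs)"
proof (cases xs)
  case (Cons b ys)
  have "(\<forall>i. Suc i < length (a # b # ys) \<longrightarrow> {(a # b # ys) ! i, (a # b # ys) ! Suc i} \<in> E)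
    \<longleftrightarrow> {a, b} \<in> E \<and> (\<forall>i. Suc i < length (b # ys) \<longrightarrow> {(b # ys) ! i, (b # ys) ! Suc i} \<in> E)"
    by (auto simp: less_Suc_eq_0_disj)
  then show ?thesis
    using Cons by (auto simp: is_path_def)
qed simp

lemma is_path_append_singleton:
  "is_path E (xs @ [a]) \<longleftrightarrow> a \<notin> set xs \<and> (xs = [] \<or> {last xs, a} \<in> E \<and> is_path E xs)"
  by (induction xs) (auto simp: is_path_Cons insert_commute)

lemma is_path_rev: "is_path E xs \<Longrightarrow> is_path E (rev xs)"
  by (induction xs) (auto simp: is_path_Cons is_path_append_singleton last_rev insert_commute)

lemma is_path_appendD2: "is_path E (xs @ ys) \<Longrightarrow> ys \<noteq> [] \<Longrightarrow> is_path E ys"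
  by (induction xs) (auto simp: is_path_Cons)

lemma is_path_join:
  assumes "is_path E xs" "is_path E ys" "last xs = hd ys"
  shows "\<exists>zs. is_path E zs \<and> hd zs = hd xs \<and> last zs = last ys \<and> set zs \<subseteq> set xs \<union> set ys"
  using assms
proof (induction xs)
  case (Cons a xs)
  show ?case
  proof (cases "xs = []")
    case True
    with Cons.prems show ?thesis by (intro exI[of _ ys]) auto
  next
    case False
    with Cons.prems have xs: "is_path E xs" "{a, hd xs} \<in> E"
      by (auto simp: is_path_Cons)
    with Cons obtain zs where zs: "is_path E zs" "hd zs = hd xs" "last zs = last ys"
      "set zs \<subseteq> set xs \<union> set ys" using False by auto
    show ?thesis
    proof (cases "a \<in> set zs")
      case True
      then obtain p q where "zs = p @ a # q" by (meson split_list)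
      with zs show ?thesis
        by (intro exI[of _ "a # q"]) (auto dest: is_path_appendD2)
    next
      case False
      with zs xs show ?thesis by (intro exI[of _ "a # zs"]) (auto simp: is_path_Cons)
    qed
  qed
qed simp

lemma connected_in_refl: "connected_in E x x"
  unfolding connected_in_def by (intro exI[of _ "[x]"]) simp

lemma connected_in_sym: "connected_in E x y \<Longrightarrow> connected_in E y x"
  unfolding connected_in_def by (metis is_path_rev hd_rev last_rev)

lemma connected_in_trans: "connected_in E x y \<Longrightarrow> connected_in E y z \<Longrightarrow> connected_in E x z"
  unfolding connected_in_def by (metis is_path_join)

lemma SF_D:
  assumes "F \<in> SF n"
  shows "edges_of F \<subseteq> {e. \<exists>x y. e = {x, y} \<and> x \<noteq> y \<and> x \<in> {1..n} \<and> y \<in> {1..n}}"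
    and "\<not> has_cycle (edges_of F)"
    and "\<forall>x\<in>{1..n}. \<exists>!r. r \<in> roots_of F \<and> connected_in (edges_of F) x r"
  using assms by (cases F; auto simp: SF_def edges_of_def roots_of_def)+

lemma SF_edgeD:
  assumes "F \<in> SF n" "{a, b} \<in> edges_of F"
  shows "a \<in> {1..n}" "b \<in> {1..n}" "a \<noteq> b"
  using SF_D(1)[OF assms(1)] assms(2) by (auto simp: doubleton_eq_iff)

lemma SF_root_unique:
  assumes "F \<in> SF n" "x \<in> {1..n}" "r \<in> roots_of F" "r' \<in> roots_of F"
    "connected_in (edges_of F) x r" "connected_in (edges_of F) x r'"
  shows "r = r'"
  using SF_D(3)[OF assms(1)] assms(2-) by blast

lemma connected_in_last: "is_path E xs \<Longrightarrow> connected_in E (hd xs) (last xs)"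
  unfolding connected_in_def by blast

lemma SF_root_path_exists:
  assumes "F \<in> SF n" "v \<in> {1..n}" "v \<notin> roots_of F"
  shows "\<exists>z xs. root_path F v (v # z # xs)"
proof -
  obtain r where r: "r \<in> roots_of F" "connected_in (edges_of F) v r"
    using SF_D(3)[OF assms(1)] assms(2) by blast
  then obtain ys where ys: "root_path F v ys" "last ys = r"
    by (auto simp: connected_in_def root_path_def)
  with assms(3) obtain z xs where "ys = v # z # xs"
    by (cases ys rule: remdups_adj.cases) (auto simp: root_path_def)
  with ys show ?thesis by blast
qed

text \<open>Two different second vertices would lead to the same root, so joining the two
  root paths behind \<open>v\<close> closes a cycle through \<open>v\<close>.\<close>
lemma SF_root_path_second_unique:
  assumes F: "F \<in> SF n" and v: "v \<in> {1..n}"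
    and p1: "root_path F v (v # z1 # xs1)" and p2: "root_path F v (v # z2 # xs2)"
  shows "z1 = z2"
proof (rule ccontr)
  assume ne: "z1 \<noteq> z2"
  let ?E = "edges_of F"
  have q1: "is_path ?E (z1 # xs1)" "{v, z1} \<in> ?E" "v \<notin> set (z1 # xs1)"
    and q2: "is_path ?E (z2 # xs2)" "{v, z2} \<in> ?E" "v \<notin> set (z2 # xs2)"
    using p1 p2 by (auto simp: root_path_def is_path_Cons)
  have "last (v # z1 # xs1) = last (v # z2 # xs2)"
    using p1 p2 SF_root_unique[OF F v] connected_in_last
    unfolding root_path_def by (metis list.sel(1))
  then have "last (z1 # xs1) = hd (rev (z2 # xs2))"
    by (simp add: hd_rev)
  then obtain zs where zs: "is_path ?E zs" "hd zs = z1" "last zs = z2"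
    "set zs \<subseteq> set (z1 # xs1) \<union> set (z2 # xs2)"
    using is_path_join[OF q1(1) is_path_rev[OF q2(1)]] by (auto simp: last_rev)
  have "2 \<le> length zs"
    using zs(1-3) ne by (cases zs rule: remdups_adj.cases) auto
  moreover have "is_path ?E (v # zs)"
    using zs q1(2,3) q2(3) by (auto simp: is_path_Cons)
  moreover have "{last (v # zs), hd (v # zs)} \<in> ?E"
    using zs(1,3) q2(2) by (auto simp: insert_commute)
  ultimately have "has_cycle ?E"
    unfolding has_cycle_def by (intro exI[of _ "v # zs"]) auto
  with SF_D(2)[OF F] show False ..
qed

lemma SF_parent:
  assumes "F \<in> SF n" "v \<in> {1..n}" "v \<notin> roots_of F"
  shows "\<exists>xs. root_path F v (v # parent F v # xs)"
proof -
  have "\<exists>!z. \<exists>xs. root_path F v (v # z # xs)"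
    using SF_root_path_exists[OF assms] SF_root_path_second_unique[OF assms(1,2)] by blast
  then show ?thesis
    unfolding parent_def by (rule theI')
qed

lemma SF_parent_edge:
  assumes "F \<in> SF n" "v \<in> {1..n}" "v \<notin> roots_of F"
  shows "{v, parent F v} \<in> edges_of F" "parent F v \<noteq> v" "parent F v \<in> {1..n}"
proof -
  show "{v, parent F v} \<in> edges_of F" "parent F v \<noteq> v"
    using SF_parent[OF assms] by (auto simp: root_path_def is_path_Cons)
  then show "parent F v \<in> {1..n}"
    using SF_edgeD[OF assms(1)] by blast
qed

lemma SF_root_path_second_eq_parent:
  assumes "F \<in> SF n" "v \<in> {1..n}" "v \<notin> roots_of F" "root_path F v (v # z # xs)"
  shows "z = parent F v"
  using SF_parent[OF assms(1-3)] SF_root_path_second_unique[OF assms(1,2) assms(4)] by blast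

lemma SF_descendant_parent:
  assumes "F \<in> SF n" "v \<in> {1..n}" "v \<notin> roots_of F"
  shows "descendant F v (parent F v)"
  using SF_parent[OF assms] SF_parent_edge(2)[OF assms]
  unfolding descendant_def ancestor_def by auto

definition parent_edges :: "(nat \<Rightarrow> nat) \<Rightarrow> nat set \<Rightarrow> nat set set" where
  "parent_edges p T = (\<lambda>v. {v, p v}) ` T"

lemma doubleton_not_in_parent_edges:
  "x \<notin> T \<Longrightarrow> y \<notin> T \<Longrightarrow> {x, y} \<notin> parent_edges p T"
  by (auto simp: parent_edges_def doubleton_eq_iff)

lemma parent_edges_path_from_outside:
  assumes "is_path (parent_edges p T) xs" "hd xs \<notin> T" "Suc i < length xs"
  shows "xs ! Suc i \<in> T \<and> p (xs ! Suc i) = xs ! i"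
  using assms(3)
proof (induction i)
  case 0
  have "xs ! 0 \<notin> T"
    using assms(1,2) by (simp add: hd_conv_nth is_path_def)
  moreover have "{xs ! 0, xs ! Suc 0} \<in> parent_edges p T"
    using assms(1) 0 by (simp add: is_path_def)
  ultimately show ?case
    by (auto simp: parent_edges_def doubleton_eq_iff)
next
  case (Suc i)
  have "xs ! i \<noteq> xs ! Suc (Suc i)" "xs ! Suc i \<noteq> xs ! Suc (Suc i)"
    using assms(1) Suc.prems by (simp_all add: is_path_def nth_eq_iff_index_eq)
  moreover have "{xs ! Suc i, xs ! Suc (Suc i)} \<in> parent_edges p T"
    using assms(1) Suc.prems by (simp add: is_path_def)
  ultimately show ?case
    using Suc by (auto simp: parent_edges_def doubleton_eq_iff)
qed

lemma parent_edges_connected_outside: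
  assumes "connected_in (parent_edges p T) a b" "a \<notin> T" "b \<notin> T"
  shows "a = b"
proof -
  obtain xs where xs: "is_path (parent_edges p T) xs" "hd xs = a" "last xs = b"
    using assms(1) by (auto simp: connected_in_def)
  show ?thesis
  proof (cases "length xs \<le> 1")
    case True
    with xs show ?thesis by (cases xs rule: remdups_adj.cases) auto
  next
    case False
    then have "Suc (length xs - 2) = length xs - 1" "Suc (length xs - 2) < length xs"
      by auto
    with parent_edges_path_from_outside[OF xs(1)] xs(2) assms(2)
    have "last xs \<in> T"
      by (metis False last_conv_nth list.size(3) zero_le_one)
    with xs assms(3) show ?thesis by simp
  qed
qed

lemma cycle_edge:
  assumes "is_path E xs" "{last xs, hd xs} \<in> E" "j < length xs"
  shows "{xs ! j, xs ! (Suc j mod length xs)} \<in> E"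
proof (cases "Suc j < length xs")
  case True
  with assms(1) show ?thesis by (simp add: is_path_def)
next
  case False
  with assms(3) have "j = length xs - 1" "xs \<noteq> []" by auto
  with assms(2) show ?thesis
    by (simp add: last_conv_nth hd_conv_nth)
qed

lemma cycle_two_neighbours:
  assumes "is_path E xs" "{last xs, hd xs} \<in> E" "3 \<le> length xs" "j < length xs"
  shows "\<exists>a b. a \<noteq> b \<and> a \<in> set xs \<and> b \<in> set xs \<and> {xs ! j, a} \<in> E \<and> {xs ! j, b} \<in> E"
proof -
  let ?m = "length xs"
  define i where "i = (if j = 0 then ?m - 1 else j - 1)"
  define k where "k = Suc j mod ?m"
  have i: "i < ?m" "Suc i mod ?m = j"
    using assms(3,4) by (auto simp: i_def)
  have k: "k < ?m" "k \<noteq> i"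
    using assms(3,4) by (auto simp: i_def k_def mod_Suc)
  then have "xs ! k \<noteq> xs ! i"
    using assms(1) i(1) by (simp add: is_path_def nth_eq_iff_index_eq)
  moreover have "{xs ! j, xs ! i} \<in> E"
    using cycle_edge[OF assms(1,2) i(1)] i(2) by (simp add: insert_commute)
  moreover have "{xs ! j, xs ! k} \<in> E"
    using cycle_edge[OF assms(1,2,4)] by (simp add: k_def)
  ultimately show ?thesis
    using i(1) k(1) by (meson nth_mem)
qed

text \<open>If \<open>f\<close> increases from each vertex of \<open>T\<close> to its parent, a vertex of minimal \<open>f\<close>
  on a cycle would need both of its cycle neighbours to be its parent.\<close>
lemma parent_edges_acyclic:
  assumes rank: "\<And>v. v \<in> T \<Longrightarrow> p v \<in> T \<Longrightarrow> (f v :: nat) < f (p v)"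
  shows "\<not> has_cycle (parent_edges p T)"
proof
  let ?E = "parent_edges p T"
  assume "has_cycle ?E"
  then obtain xs where xs: "3 \<le> length xs" "is_path ?E xs" "{last xs, hd xs} \<in> ?E"
    by (auto simp: has_cycle_def)
  define S where "S = set xs \<inter> T"
  have "{xs ! 0, xs ! 1} \<in> ?E" "xs ! 0 \<in> set xs" "xs ! 1 \<in> set xs"
    using xs by (auto simp: is_path_def)
  then have "S \<noteq> {}"
    unfolding S_def parent_edges_def by (auto simp: doubleton_eq_iff)
  then obtain w where w: "w \<in> S" "\<And>y. y \<in> S \<Longrightarrow> f w \<le> f y"
    using arg_min_nat_lemma[of "\<lambda>x. x \<in> S" _ f] by (metis all_not_in_conv)
  then obtain j where j: "j < length xs" "xs ! j = w"
    unfolding S_def by (auto simp: in_set_conv_nth)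
  have to_parent: "p w = c" if c: "c \<in> set xs" "{w, c} \<in> ?E" for c
  proof -
    obtain u where u: "u \<in> T" "{w, c} = {u, p u}"
      using c(2) by (auto simp: parent_edges_def)
    show ?thesis
    proof (cases "u = w")
      case False
      then have "c \<in> S" "p c = w"
        using u c(1) unfolding S_def by (auto simp: doubleton_eq_iff)
      with rank[of c] w show ?thesis
        unfolding S_def by fastforce
    qed (use u in \<open>auto simp: doubleton_eq_iff\<close>)
  qed
  obtain a b where "a \<noteq> b" "a \<in> set xs" "b \<in> set xs" "{w, a} \<in> ?E" "{w, b} \<in> ?E"
    using cycle_two_neighbours[OF xs(2,3,1) j(1)] j(2) by blast
  with to_parent show False by metis
qed

lemma parent_edges_reach_outside:
  assumes rank: "\<And>v. v \<in> T \<Longrightarrow> p v \<in> T \<Longrightarrow> (f v :: nat) < f (p v)"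
    and bound: "\<And>v. v \<in> T \<Longrightarrow> f v < N"
    and closed: "p ` T \<subseteq> A" and "x \<in> A"
  shows "\<exists>r. r \<in> A - T \<and> connected_in (parent_edges p T) x r"
  using \<open>x \<in> A\<close>
proof (induction "N - f x" arbitrary: x rule: less_induct)
  case less
  show ?case
  proof (cases "x \<in> T")
    case True
    have "x \<noteq> p x"
      using rank[OF True] True by (metis less_irrefl)
    then have step: "connected_in (parent_edges p T) x (p x)"
      using True unfolding connected_in_def parent_edges_def
      by (intro exI[of _ "[x, p x]"]) (auto simp: is_path_Cons)
    show ?thesis
    proof (cases "p x \<in> T")
      case True
      with \<open>x \<in> T\<close> rank bound have "N - f (p x) < N - f x"
        by (meson diff_less_mono2 order.strict_trans)
      with less.hyps closed \<open>x \<in> T\<close> obtain r where "r \<in> A - T" "connected_in (parent_edges p T) (p x) r"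
        by blast
      with step show ?thesis
        using connected_in_trans by blast
    qed (use step closed \<open>x \<in> T\<close> in blast)
  qed (use less.prems connected_in_refl in blast)
qed

definition pos :: "'a list \<Rightarrow> 'a \<Rightarrow> nat" where
  "pos xs x = (THE i. i < length xs \<and> xs ! i = x)"

lemma pos_nth: "distinct xs \<Longrightarrow> i < length xs \<Longrightarrow> pos xs (xs ! i) = i"
  unfolding pos_def by (rule the_equality) (auto simp: nth_eq_iff_index_eq)

lemma pos_less_length: "distinct xs \<Longrightarrow> x \<in> set xs \<Longrightarrow> pos xs x < length xs"
  by (metis in_set_conv_nth pos_nth)

lemma nth_pos: "distinct xs \<Longrightarrow> x \<in> set xs \<Longrightarrow> xs ! pos xs x = x"
  by (metis in_set_conv_nth pos_nth)

lemma nth_in_set_take_iff: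
  assumes "distinct xs" "j < length xs"
  shows "xs ! j \<in> set (take m xs) \<longleftrightarrow> j < m"
proof
  assume "xs ! j \<in> set (take m xs)"
  then obtain i where "i < m" "i < length xs" "xs ! i = xs ! j"
    by (auto simp: in_set_conv_nth)
  with assms show "j < m"
    by (simp add: nth_eq_iff_index_eq)
next
  assume "j < m"
  with assms(2) show "xs ! j \<in> set (take m xs)"
    by (metis in_set_conv_nth length_take min_less_iff_conj nth_take)
qed

lemma take_Suc_nth: "k < length xs \<Longrightarrow> take (Suc k) xs = take k xs @ [xs ! k]"
  by (simp add: take_Suc_conv_app_nth)

text \<open>Each listed vertex has its parent among the roots of \<open>F\<close> or later in the list; this
  is what makes the step adding \<open>vs ! k\<close> to \<open>chain_forest n F vs k\<close> a cover.\<close>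
definition parents_not_before :: "forest \<Rightarrow> nat list \<Rightarrow> bool" where
  "parents_not_before F vs \<longleftrightarrow> (\<forall>k < length vs. parent F (vs ! k) \<notin> set (take (Suc k) vs))"

lemma parents_not_before_pos:
  assumes "parents_not_before F vs" "distinct vs" "v \<in> set vs" "parent F v \<in> set vs"
  shows "pos vs v < pos vs (parent F v)"
proof -
  define k where "k = pos vs v"
  have k: "k < length vs" "vs ! k = v"
    using assms(2,3) by (simp_all add: k_def pos_less_length nth_pos)
  have j: "pos vs (parent F v) < length vs" "vs ! pos vs (parent F v) = parent F v"
    using assms(2,4) by (simp_all add: pos_less_length nth_pos)
  have "parent F v \<notin> set (take (Suc k) vs)"
    using assms(1) k unfolding parents_not_before_def by auto
  with j have "\<not> pos vs (parent F v) < Suc k"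
    using nth_in_set_take_iff[OF assms(2) j(1)] by simp
  then show ?thesis
    by (simp add: k_def)
qed

lemma chain_forest_simps:
  "edges_of (chain_forest n F vs i) = parent_edges (parent F) (set (take i vs))"
  "roots_of (chain_forest n F vs i) = {1..n} - set (take i vs)"
  by (simp_all add: chain_forest_def edges_of_def roots_of_def parent_edges_def)

text \<open>The edge added at step \<open>k\<close> joins two roots of \<open>chain_forest n F vs k\<close>, so it is not
  one of its parent edges; hence it is \<open>{v, parent F v}\<close> for \<open>v = vs ! k\<close>, and \<open>v\<close> is the
  root that disappears, leaving \<open>parent F v\<close> as a root.\<close>
lemma sf_covers_chain_forest_parent_not_before:
  assumes d: "distinct vs" and k: "k < length vs" and vn: "vs ! k \<in> {1..n}"
    and cov: "sf_covers n (chain_forest n F vs k) (chain_forest n F vs (Suc k))"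
  shows "parent F (vs ! k) \<notin> set (take (Suc k) vs)"
proof -
  define v where "v = vs ! k"
  let ?T = "set (take k vs)"
  let ?R = "{1..n} - ?T"
  let ?E = "parent_edges (parent F) ?T"
  have tk: "take (Suc k) vs = take k vs @ [v]"
    using k by (simp add: v_def take_Suc_nth)
  have vR: "v \<in> ?R"
    using nth_in_set_take_iff[OF d k, of k] vn by (simp add: v_def)
  have forests:
    "edges_of (chain_forest n F vs k) = ?E" "roots_of (chain_forest n F vs k) = ?R"
    "edges_of (chain_forest n F vs (Suc k)) = insert {v, parent F v} ?E"
    "roots_of (chain_forest n F vs (Suc k)) = ?R - {v}"
    by (auto simp: chain_forest_simps tk parent_edges_def)
  obtain x y where xy: "x \<in> ?R" "y \<in> ?R" "\<not> connected_in ?E x y"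
      "insert {v, parent F v} ?E = insert {x, y} ?E"
      "?R - {v} = ?R - {x} \<or> ?R - {v} = ?R - {y}"
    using cov unfolding sf_covers_def forests by metis
  have "{x, y} \<notin> ?E"
    using xy(1,2) by (simp add: doubleton_not_in_parent_edges)
  with xy(4) have "{x, y} = {v, parent F v}"
    by blast
  moreover have "v = x \<or> v = y" "x \<noteq> y"
    using xy(1,2,3,5) vR connected_in_refl by blast+
  ultimately have "parent F v \<in> ?R - {v}"
    using xy(1,2) by (auto simp: doubleton_eq_iff)
  then show ?thesis
    by (simp add: tk v_def)
qed

lemma root_path_pos_increasing:
  assumes F: "F \<in> SF n" and d: "distinct vs" and sv: "set vs = {1..n} - roots_of F"
    and P: "parents_not_before F vs"
  shows "root_path F v xs \<Longrightarrow> v \<in> set vs \<Longrightarrow> x \<in> set xs \<Longrightarrow> x \<in> set vs \<Longrightarrow> x \<noteq> v \<Longrightarrow>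
    pos vs v < pos vs x"
proof (induction xs arbitrary: v)
  case (Cons a xs)
  have vn: "v \<in> {1..n}" "v \<notin> roots_of F" and av: "a = v"
    using Cons.prems(1,2) sv by (auto simp: root_path_def)
  then obtain z rest where xs: "xs = z # rest"
    using Cons.prems(1) by (cases xs) (auto simp: root_path_def)
  with Cons.prems(1) av have z: "z = parent F v"
    using SF_root_path_second_eq_parent[OF F vn] by simp
  have zpath: "is_path (edges_of F) (z # rest)" "last (z # rest) \<in> roots_of F"
    using Cons.prems(1) xs by (auto simp: root_path_def is_path_Cons)
  show ?case
  proof (cases "x = z")
    case True
    with Cons.prems(2,4) z show ?thesis
      using parents_not_before_pos[OF P d] by simp
  next
    case False
    then have "x \<in> set rest"
      using Cons.prems(3,5) xs av by simp
    have "z \<notin> roots_of F"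
    proof
      assume "z \<in> roots_of F"
      moreover have "z \<in> {1..n}"
        using SF_parent_edge(3)[OF F vn] z by simp
      ultimately have "last (z # rest) = z"
        using SF_root_unique[OF F _ zpath(2)] connected_in_last[OF zpath(1)] connected_in_refl
        by (metis list.sel(1))
      with \<open>x \<in> set rest\<close> have "z \<in> set rest"
        by (metis last_ConsR last_in_set empty_iff list.set(1))
      with zpath(1) show False
        by (simp add: is_path_Cons)
    qed
    then have "z \<in> set vs"
      using SF_parent_edge(3)[OF F vn] z sv by simp
    then have "pos vs v < pos vs z"
      using parents_not_before_pos[OF P d Cons.prems(2)] z by simp
    also have "pos vs z < pos vs x"
      using Cons.IH[of z] zpath xs \<open>z \<in> set vs\<close> \<open>x \<in> set rest\<close> Cons.prems(4) False
      by (simp add: root_path_def)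
    finally show ?thesis .
  qed
qed (simp add: root_path_def)

lemma parents_not_before_imp_linear_extension:
  assumes F: "F \<in> SF n" and d: "distinct vs" and sv: "set vs = {1..n} - roots_of F"
    and P: "parents_not_before F vs"
    and i: "i < length vs" and j: "j < length vs" and de: "descendant F (vs ! i) (vs ! j)"
  shows "i < j"
proof -
  obtain xs where "root_path F (vs ! i) xs" "vs ! j \<in> set xs" "vs ! j \<noteq> vs ! i"
    using de by (auto simp: descendant_def ancestor_def)
  then have "pos vs (vs ! i) < pos vs (vs ! j)"
    using root_path_pos_increasing[OF F d sv P] i j by simp
  with d i j show ?thesis
    by (simp add: pos_nth)
qed

lemma linear_extension_imp_parents_not_before:
  assumes F: "F \<in> SF n" and d: "distinct vs" and sv: "set vs = {1..n} - roots_of F"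
    and L: "\<forall>i < length vs. \<forall>j < length vs. descendant F (vs ! i) (vs ! j) \<longrightarrow> i < j"
  shows "parents_not_before F vs"
  unfolding parents_not_before_def
proof (intro allI impI notI)
  fix k assume k: "k < length vs" and pk: "parent F (vs ! k) \<in> set (take (Suc k) vs)"
  then obtain j where j: "j < length vs" "vs ! j = parent F (vs ! k)"
    by (meson in_set_conv_nth in_set_takeD)
  have "vs ! k \<in> {1..n}" "vs ! k \<notin> roots_of F"
    using k sv nth_mem by blast+
  with j have "k < j"
    using SF_descendant_parent[OF F] L k by metis
  moreover have "j < Suc k"
    using pk j nth_in_set_take_iff[OF d j(1)] by simp
  ultimately show False
    by simp
qed

lemma chain_forest_SF:
  assumes F: "F \<in> SF n" and d: "distinct vs" and sv: "set vs = {1..n} - roots_of F"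
    and P: "parents_not_before F vs"
  shows "chain_forest n F vs i \<in> SF n"
proof -
  let ?T = "set (take i vs)"
  let ?E = "parent_edges (parent F) ?T"
  have T: "v \<in> {1..n}" "v \<notin> roots_of F" "v \<in> set vs" if "v \<in> ?T" for v
    using in_set_takeD[OF that] sv by auto
  have rank: "pos vs v < pos vs (parent F v)" if "v \<in> ?T" "parent F v \<in> ?T" for v
    using parents_not_before_pos[OF P d T(3) T(3)] that by blast
  have "{v, parent F v} \<in> {e. \<exists>x y. e = {x, y} \<and> x \<noteq> y \<and> x \<in> {1..n} \<and> y \<in> {1..n}}"
    if "v \<in> ?T" for v
    using T[OF that] SF_parent_edge(2,3)[OF F, of v] by (intro CollectI exI[of _ v] exI[of _ "parent F v"]) auto
  then have edges: "?E \<subseteq> {e. \<exists>x y. e = {x, y} \<and> x \<noteq> y \<and> x \<in> {1..n} \<and> y \<in> {1..n}}"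
    unfolding parent_edges_def image_subset_iff by (intro ballI)
  have roots: "\<exists>!r. r \<in> {1..n} - ?T \<and> connected_in ?E x r" if x: "x \<in> {1..n}" for x
  proof -
    have "parent F ` ?T \<subseteq> {1..n}"
      using T SF_parent_edge(3)[OF F] by blast
    moreover have "pos vs v < length vs" if "v \<in> ?T" for v
      using pos_less_length[OF d T(3)[OF that]] .
    ultimately obtain r where r: "r \<in> {1..n} - ?T" "connected_in ?E x r"
      using parent_edges_reach_outside[of ?T "parent F" "pos vs", OF rank] x by blast
    moreover have "r' = r" if "r' \<in> {1..n} - ?T" "connected_in ?E x r'" for r'
    proof -
      have "connected_in ?E r' r"
        using connected_in_trans[OF connected_in_sym[OF that(2)] r(2)] .
      with that(1) r(1) show ?thesis
        using parent_edges_connected_outside by blast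
    qed
    ultimately show ?thesis
      by blast
  qed
  have "chain_forest n F vs i = (?E, {1..n} - ?T)"
    by (simp add: chain_forest_def parent_edges_def)
  then show ?thesis
    unfolding SF_def
    using edges parent_edges_acyclic[of ?T "parent F" "pos vs", OF rank] roots by auto
qed
lemma parents_not_before_imp_sf_covers:
  assumes F: "F \<in> SF n" and d: "distinct vs" and sv: "set vs = {1..n} - roots_of F"
    and P: "parents_not_before F vs" and k: "k < length vs"
  shows "sf_covers n (chain_forest n F vs k) (chain_forest n F vs (Suc k))"
proof -
  define v where "v = vs ! k"
  let ?T = "set (take k vs)"
  have tk: "take (Suc k) vs = take k vs @ [v]"
    using k by (simp add: v_def take_Suc_nth)
  have vT: "v \<notin> ?T"
    using nth_in_set_take_iff[OF d k, of k] by (simp add: v_def)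
  have vn: "v \<in> {1..n}" "v \<notin> roots_of F"
    using nth_mem[OF k] sv by (auto simp: v_def)
  have pT: "parent F v \<notin> ?T" "parent F v \<in> {1..n}" "parent F v \<noteq> v"
    using P k tk SF_parent_edge[OF F vn] by (auto simp: parents_not_before_def v_def)
  have "\<not> connected_in (parent_edges (parent F) ?T) v (parent F v)"
    using parent_edges_connected_outside vT pT by metis
  moreover have
    "edges_of (chain_forest n F vs (Suc k)) = insert {v, parent F v} (edges_of (chain_forest n F vs k))"
    "roots_of (chain_forest n F vs (Suc k)) = roots_of (chain_forest n F vs k) - {v}"
    by (auto simp: chain_forest_simps tk parent_edges_def)
  ultimately show ?thesis
    unfolding sf_covers_def using chain_forest_SF[OF F d sv P] vT vn pT
    by (auto simp: chain_forest_simps)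
qed

theorem lemma5p11:
  fixes n :: nat and F :: forest and vs :: "nat list"
  assumes "F \<in> SF n"
    and "distinct vs"
    and "set vs = {1..n} - roots_of F"
  shows "(\<forall>i < length vs. sf_covers n (chain_forest n F vs i) (chain_forest n F vs (Suc i)))
     \<longleftrightarrow> (\<forall>i < length vs. \<forall>j < length vs. descendant F (vs ! i) (vs ! j) \<longrightarrow> i < j)"
proof
  assume "\<forall>i < length vs. sf_covers n (chain_forest n F vs i) (chain_forest n F vs (Suc i))"
  with assms(2,3) have "parents_not_before F vs"
    unfolding parents_not_before_def
    using sf_covers_chain_forest_parent_not_before nth_mem by blast
  then show "\<forall>i < length vs. \<forall>j < length vs. descendant F (vs ! i) (vs ! j) \<longrightarrow> i < j"
    using parents_not_before_imp_linear_extension[OF assms] by blast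
next
  assume "\<forall>i < length vs. \<forall>j < length vs. descendant F (vs ! i) (vs ! j) \<longrightarrow> i < j"
  then have "parents_not_before F vs"
    using linear_extension_imp_parents_not_before[OF assms] by blast
  then show "\<forall>i < length vs. sf_covers n (chain_forest n F vs i) (chain_forest n F vs (Suc i))"
    using parents_not_before_imp_sf_covers[OF assms] by blast
qed

end
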